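(* Let $V$ be the crossed module with group part $\langle a\mid a^4=1\rangle\cong C_4$, module part $\langle b\mid b^4=1\rangle\cong C_4$, structure morphism $\mu(b)=a^2$ and action ${}^ab=b^{-1}$. Then for $n\in\mathbb N_0$ (with $\mathbb Z/n$ a trivial module, $\mathbb Z/0=\mathbb Z$), \[H^2(V,\mathbb Z/n)\cong\begin{cases}\mathbb Z/2 & n\text{ even},\\ 0 & n\text{ odd}.\end{cases}\]
   Context: A crossed module $V=(G_V,M_V,\mu)$: left action ${}^gm$ of $G_V$ on $M_V$, $\mu({}^gm)=g\mu(m)g^{-1}$, ${}^{\mu(n)}m=nmn^{-1}$. With $\bar g$ the class of $g$ in $\pi_0(V)=G_V/\mu(M_V)$ and $M$ an abelian $\pi_0(V)$-module, $H^2(V,M)$ is the second cohomology of $C^1(V,M)=\mathrm{Map}(G_V,M)\to C^2(V,M)=\mathrm{Map}(M_V\times G_V\times G_V,M)\to C^3(V,M)=\mathrm{Map}(M_V\times M_V\times G_V\times M_V\times G_V\times G_V,M)$, $(dc)(m,h,g)=c(\mu(m)h)-c(hg)+\bar hc(g)$, $(dc)(p,n,k,m,h,g)=c(p,\mu(n)k,\mu(m)h)-c(pn,k,hg)+c(n\,{}^km,kh,g)-\bar kc(m,h,g)$ (equivalently, the cohomology of the associated coskeleton simplicial group). *)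

theory Defs
  imports "HOL-Algebra.Algebra"
begin

definition Zmod :: "nat \<Rightarrow> int monoid" where
  "Zmod n = (if n = 0 then \<lparr>carrier = UNIV, monoid.mult = (+), one = 0\<rparr>
             else \<lparr>carrier = {0..<int n}, monoid.mult = (\<lambda>x y. (x + y) mod int n), one = 0\<rparr>)"

text \<open>The action of pi_0(V) on A is given as phi : G_V -> (A -> A), factoring through pi_0(V).
  Abelian groups are written multiplicatively (HOL-Algebra convention).\<close>

definition xm_dom2 where
  "xm_dom2 G Mv = carrier Mv \<times> carrier G \<times> carrier G"

definition xm_dom3 where
  "xm_dom3 G Mv = carrier Mv \<times> carrier Mv \<times> carrier G \<times> carrier Mv \<times> carrier G \<times> carrier G"

definition xm_C1 where
  "xm_C1 G A = (carrier G \<rightarrow>\<^sub>E carrier A)"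

definition xm_C2 where
  "xm_C2 G Mv A = (xm_dom2 G Mv \<rightarrow>\<^sub>E carrier A)"

definition xm_d1 where
  "xm_d1 G Mv A mu phi c = (\<lambda>(m, h, g) \<in> xm_dom2 G Mv.
      c (mu m \<otimes>\<^bsub>G\<^esub> h) \<otimes>\<^bsub>A\<^esub> inv\<^bsub>A\<^esub> (c (h \<otimes>\<^bsub>G\<^esub> g)) \<otimes>\<^bsub>A\<^esub> phi h (c g))"

definition xm_d2 where
  "xm_d2 G Mv A mu act phi c = (\<lambda>(p, n, k, m, h, g) \<in> xm_dom3 G Mv.
      c (p, mu n \<otimes>\<^bsub>G\<^esub> k, mu m \<otimes>\<^bsub>G\<^esub> h)
      \<otimes>\<^bsub>A\<^esub> inv\<^bsub>A\<^esub> (c (p \<otimes>\<^bsub>Mv\<^esub> n, k, h \<otimes>\<^bsub>G\<^esub> g))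
      \<otimes>\<^bsub>A\<^esub> c (n \<otimes>\<^bsub>Mv\<^esub> act k m, k \<otimes>\<^bsub>G\<^esub> h, g)
      \<otimes>\<^bsub>A\<^esub> inv\<^bsub>A\<^esub> (phi k (c (m, h, g))))"

definition xm_Z2 where
  "xm_Z2 G Mv A mu act phi =
     {c \<in> xm_C2 G Mv A. \<forall>x \<in> xm_dom3 G Mv. xm_d2 G Mv A mu act phi c x = \<one>\<^bsub>A\<^esub>}"

definition xm_B2 where
  "xm_B2 G Mv A mu phi = xm_d1 G Mv A mu phi ` xm_C1 G A"

definition xm_Z2_group where
  "xm_Z2_group G Mv A mu act phi =
     \<lparr>carrier = xm_Z2 G Mv A mu act phi,
      monoid.mult = (\<lambda>c c'. \<lambda>x \<in> xm_dom2 G Mv. c x \<otimes>\<^bsub>A\<^esub> c' x),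
      one = (\<lambda>x \<in> xm_dom2 G Mv. \<one>\<^bsub>A\<^esub>)\<rparr>"

definition xm_H2 where
  "xm_H2 G Mv A mu act phi =
     xm_Z2_group G Mv A mu act phi Mod xm_B2 G Mv A mu phi"

section \<open>The specific crossed module V: G_V = <a | a^4> = Z/4 (a = 1), M_V = <b | b^4> = Z/4 (b = 1),
  mu(b) = a^2, and a acts by b |-> b^{-1}\<close>

definition V_G :: "int monoid" where "V_G = Zmod 4"
definition V_M :: "int monoid" where "V_M = Zmod 4"
definition V_mu :: "int \<Rightarrow> int" where "V_mu m = (2 * m) mod 4"
definition V_act :: "int \<Rightarrow> int \<Rightarrow> int" where
  "V_act g m = (if even g then m else (- m) mod 4)"

definition trivial_action :: "int \<Rightarrow> int \<Rightarrow> int" where "trivial_action g x = x"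

end

theory Submission
  imports Defs "HOL-Number_Theory.Cong"
begin

(* Write G_V and M_V additively as Z/4 and represent a 2-cochain by a 4-periodic integer function
   c(m, h, g), read modulo n.  Special cases of the cocycle identity show that every cocycle has the
   form c(m, h, g) = a(m) - f(2m, h) + f(h, g), where f = c(0, -, -) is a group 2-cocycle of Z/4
   and a = c(-, 0, 0); consequently a cocycle vanishing at (0,0,0), (1,0,0), (0,1,1), (0,1,2)
   vanishes identically.  Matching these four values shows that every cocycle is cohomologous to
   t * omega with omega(m, h, g) = [h and g odd] and t = c(1,0,0) + c(0,1,1) - 2s for an arbitrary s,
   while a coboundary dF has c(1,0,0) + c(0,1,1) = 2 F(1).  Hence c(1,0,0) + c(0,1,1) mod gcd 2 n
   induces an isomorphism H^2(V, Z/n) = Z/gcd(2, n). *)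

section \<open>Cocycles of V as periodic integer functions\<close>

definition periodic4 :: "(int \<times> int \<times> int \<Rightarrow> 'a) \<Rightarrow> bool" where
  "periodic4 c \<longleftrightarrow> (\<forall>m h g. c (m mod 4, h mod 4, g mod 4) = c (m, h, g))"

lemma periodic4D: "periodic4 c \<Longrightarrow> c (m mod 4, h mod 4, g mod 4) = c (m, h, g)"
  by (simp add: periodic4_def)

lemma V_act_zero_right [simp]: "V_act k 0 = 0"
  by (simp add: V_act_def)

lemma V_mu_act: "[2 * V_act k m = 2 * m] (mod 4)"
proof (cases "even k")
  case False
  have "[2 * ((- m) mod 4) = 2 * (- m)] (mod 4)"
    by (intro cong_scalar_left) simp
  moreover have "[2 * (- m) = 2 * m] (mod 4)"
    unfolding cong_iff_dvd_diff by simp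
  ultimately show ?thesis
    using False by (simp add: V_act_def cong_trans)
qed (simp add: V_act_def)

(* The condition xm_d2 c = 0 for V and trivial coefficients, lifted to integer values: additively,
   mu(n) k = 2n + k and n (k.m) = n + V_act k m. *)
definition V_cocycle_mod :: "int \<Rightarrow> (int \<times> int \<times> int \<Rightarrow> int) \<Rightarrow> bool" where
  "V_cocycle_mod N c \<longleftrightarrow>
     (\<forall>p n k m h g. [c (p, 2 * n + k, 2 * m + h) + c (n + V_act k m, k + h, g)
                      = c (p + n, k, h + g) + c (m, h, g)] (mod N))"

lemma V_cocycle_modD:
  "V_cocycle_mod N c \<Longrightarrow> [c (p, 2 * n + k, 2 * m + h) + c (n + V_act k m, k + h, g)
                              = c (p + n, k, h + g) + c (m, h, g)] (mod N)"
  by (simp add: V_cocycle_mod_def)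

lemma V_cocycle_mod_cong:
  assumes "V_cocycle_mod N c" and "\<And>x. [c x = c' x] (mod N)"
  shows "V_cocycle_mod N c'"
  unfolding V_cocycle_mod_def
proof (intro allI)
  fix p n k m h g
  have "[c' (p, 2 * n + k, 2 * m + h) + c' (n + V_act k m, k + h, g)
        = c (p, 2 * n + k, 2 * m + h) + c (n + V_act k m, k + h, g)] (mod N)"
    using assms(2) by (intro cong_add) (auto intro: cong_sym)
  moreover have "[c (p, 2 * n + k, 2 * m + h) + c (n + V_act k m, k + h, g)
        = c (p + n, k, h + g) + c (m, h, g)] (mod N)"
    using assms(1) by (rule V_cocycle_modD)
  moreover have "[c (p + n, k, h + g) + c (m, h, g) = c' (p + n, k, h + g) + c' (m, h, g)] (mod N)"
    using assms(2) by (intro cong_add)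
  ultimately show "[c' (p, 2 * n + k, 2 * m + h) + c' (n + V_act k m, k + h, g)
        = c' (p + n, k, h + g) + c' (m, h, g)] (mod N)"
    by (blast intro: cong_trans)
qed

lemma V_cocycle_mod_add:
  assumes "V_cocycle_mod N c" and "V_cocycle_mod N c'"
  shows "V_cocycle_mod N (\<lambda>x. c x + c' x)"
  unfolding V_cocycle_mod_def
proof (intro allI)
  fix p n k m h g
  show "[c (p, 2 * n + k, 2 * m + h) + c' (p, 2 * n + k, 2 * m + h)
         + (c (n + V_act k m, k + h, g) + c' (n + V_act k m, k + h, g))
       = c (p + n, k, h + g) + c' (p + n, k, h + g) + (c (m, h, g) + c' (m, h, g))] (mod N)"
    using cong_add[OF assms(1)[THEN V_cocycle_modD, where p=p and n=n and k=k and m=m and h=h and g=g]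
                      assms(2)[THEN V_cocycle_modD, where p=p and n=n and k=k and m=m and h=h and g=g]]
    by (simp add: ac_simps)
qed

lemma V_cocycle_mod_scale:
  assumes "V_cocycle_mod N c"
  shows "V_cocycle_mod N (\<lambda>x. a * c x)"
  unfolding V_cocycle_mod_def
  using cong_scalar_left[OF assms[THEN V_cocycle_modD], of a] by (simp add: distrib_left)

lemma V_cocycle_mod_diff:
  "V_cocycle_mod N c \<Longrightarrow> V_cocycle_mod N c' \<Longrightarrow> V_cocycle_mod N (\<lambda>x. c x - c' x)"
  using V_cocycle_mod_add[of N c "\<lambda>x. (- 1) * c' x"] V_cocycle_mod_scale[of N c' "- 1"] by simp

definition V_coboundary :: "(int \<Rightarrow> int) \<Rightarrow> int \<times> int \<times> int \<Rightarrow> int" where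
  "V_coboundary F = (\<lambda>(m, h, g). F ((2 * m + h) mod 4) - F ((h + g) mod 4) + F (g mod 4))"

lemma periodic4_coboundary: "periodic4 (V_coboundary F)"
proof -
  have "(2 * (m mod 4) + h) mod 4 = (2 * m + h) mod 4" for m h :: int
    by (metis mod_add_left_eq mod_mult_right_eq)
  then show ?thesis
    by (simp add: periodic4_def V_coboundary_def mod_simps)
qed

lemma V_cocycle_mod_coboundary: "V_cocycle_mod N (V_coboundary F)"
  unfolding V_cocycle_mod_def
proof (intro allI)
  fix p n k m h g :: int
  have "[2 * n + 2 * V_act k m + (k + h) = 2 * n + 2 * m + (k + h)] (mod 4)"
    by (intro cong_add cong_refl V_mu_act)
  then have "(2 * (n + V_act k m) + (k + h)) mod 4 = (2 * n + k + (2 * m + h)) mod 4"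
    by (simp add: cong_def algebra_simps)
  then have "V_coboundary F (p, 2 * n + k, 2 * m + h) + V_coboundary F (n + V_act k m, k + h, g)
      = V_coboundary F (p + n, k, h + g) + V_coboundary F (m, h, g)"
    unfolding V_coboundary_def prod.case by (simp add: algebra_simps)
  then show "[V_coboundary F (p, 2 * n + k, 2 * m + h) + V_coboundary F (n + V_act k m, k + h, g)
      = V_coboundary F (p + n, k, h + g) + V_coboundary F (m, h, g)] (mod N)"
    by simp
qed

definition V_omega :: "int \<times> int \<times> int \<Rightarrow> int" where
  "V_omega = (\<lambda>(m, h, g). if odd h \<and> odd g then 1 else 0)"

lemma periodic4_omega: "periodic4 V_omega"
proof -
  have "even (h mod 4) \<longleftrightarrow> even h" for h :: int
    by presburger
  then show ?thesis
    by (simp add: periodic4_def V_omega_def)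
qed

lemma V_cocycle_mod_omega: "V_cocycle_mod N V_omega"
  unfolding V_cocycle_mod_def V_omega_def
  by (intro allI, cases "even k"; cases "even h"; cases "even g") auto

section \<open>Structure of cocycles\<close>

context
  fixes N :: int and c :: "int \<times> int \<times> int \<Rightarrow> int"
  assumes cocycle: "V_cocycle_mod N c"
begin

lemma V_cocycle_mod_zero_middle: "[c (p, 0, g) = c (p, 0, 0)] (mod N)"
  using V_cocycle_modD[OF cocycle, where p=p and n=0 and k=0 and m=0 and h=0 and g=g]
  by (simp add: cong_add_rcancel cong_sym_eq)

lemma V_cocycle_mod_zero_ends: "[c (0, k, 0) = c (0, 0, 0)] (mod N)"
  using V_cocycle_modD[OF cocycle, where p=0 and n=0 and k=k and m=0 and h=0 and g=0]
  by (simp add: cong_iff_dvd_diff algebra_simps)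

lemma V_cocycle_mod_group_cocycle:
  "[c (0, k, h + g) = c (0, k, h) + c (0, k + h, g) - c (0, h, g)] (mod N)"
  using V_cocycle_modD[OF cocycle, where p=0 and n=0 and k=k and m=0 and h=h and g=g]
  by (simp add: cong_iff_dvd_diff dvd_diff_commute algebra_simps)

lemma V_cocycle_mod_split_last: "[c (m, h, g) = c (m, h, 0) + c (0, h, g) - c (0, 0, 0)] (mod N)"
proof -
  have "[c (m, h, g) = c (m, h, 0) + c (0, h, g) - c (0, 0, g)] (mod N)"
    using V_cocycle_modD[OF cocycle, where p=m and n=0 and k=h and m=0 and h=0 and g=g]
    by (simp add: cong_iff_dvd_diff dvd_diff_commute algebra_simps)
  also have "[c (m, h, 0) + c (0, h, g) - c (0, 0, g) = c (m, h, 0) + c (0, h, g) - c (0, 0, 0)] (mod N)"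
    by (intro cong_diff cong_refl V_cocycle_mod_zero_middle)
  finally show ?thesis .
qed

lemma V_cocycle_mod_split_middle:
  "[c (m, h, 0) = c (m, 0, 0) + c (0, 0, 0) - c (0, 2 * m, h)] (mod N)"
proof -
  have "[c (m, h, 0) = c (m, 0, h) + c (0, h, 0) - c (0, 2 * m, h)] (mod N)"
    using V_cocycle_modD[OF cocycle, where p=0 and n=m and k=0 and m=0 and h=h and g=0]
    by (simp add: cong_iff_dvd_diff dvd_diff_commute algebra_simps)
  also have "[c (m, 0, h) + c (0, h, 0) - c (0, 2 * m, h) = c (m, 0, 0) + c (0, 0, 0) - c (0, 2 * m, h)] (mod N)"
    by (intro cong_add cong_diff cong_refl V_cocycle_mod_zero_middle V_cocycle_mod_zero_ends)
  finally show ?thesis .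
qed

lemma V_cocycle_mod_decompose:
  "[c (m, h, g) = c (m, 0, 0) - c (0, 2 * m, h) + c (0, h, g)] (mod N)"
proof -
  have "[c (m, h, g) = c (m, h, 0) + c (0, h, g) - c (0, 0, 0)] (mod N)"
    by (rule V_cocycle_mod_split_last)
  also have "[c (m, h, 0) + c (0, h, g) - c (0, 0, 0)
      = c (m, 0, 0) + c (0, 0, 0) - c (0, 2 * m, h) + c (0, h, g) - c (0, 0, 0)] (mod N)"
    by (intro cong_add cong_diff cong_refl V_cocycle_mod_split_middle)
  finally show ?thesis by (simp add: algebra_simps)
qed

lemma V_cocycle_mod_base_add:
  "[c (p + n, 0, 0) = c (p, 0, 0) + c (n, 0, 0) - c (0, 2 * p, 2 * n)] (mod N)"
proof -
  have "[c (p + n, 0, 0) = c (p, 2 * n, 0) + c (n, 0, 0) - c (0, 0, 0)] (mod N)"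
    using V_cocycle_modD[OF cocycle, where p=p and n=n and k=0 and m=0 and h=0 and g=0]
    by (simp add: cong_iff_dvd_diff dvd_diff_commute algebra_simps)
  also have "[c (p, 2 * n, 0) + c (n, 0, 0) - c (0, 0, 0)
      = c (p, 0, 0) + c (0, 0, 0) - c (0, 2 * p, 2 * n) + c (n, 0, 0) - c (0, 0, 0)] (mod N)"
    by (intro cong_add cong_diff cong_refl V_cocycle_mod_split_middle)
  finally show ?thesis by (simp add: algebra_simps)
qed

lemma V_cocycle_mod_base_act:
  "[c (V_act k m, 0, 0) = c (m, 0, 0) + c (0, 2 * V_act k m, k) - c (0, k, 2 * m)] (mod N)"
proof -
  have "[c (V_act k m, 0, 0) + c (0, 0, 0) - c (0, 2 * V_act k m, k) = c (V_act k m, k, 0)] (mod N)"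
    by (rule cong_sym[OF V_cocycle_mod_split_middle])
  also have "[c (V_act k m, k, 0) = c (0, k, 0) + c (m, 0, 0) - c (0, k, 2 * m)] (mod N)"
    using V_cocycle_modD[OF cocycle, where p=0 and n=0 and k=k and m=m and h=0 and g=0]
    by (simp add: cong_iff_dvd_diff dvd_diff_commute algebra_simps)
  also have "[c (0, k, 0) + c (m, 0, 0) - c (0, k, 2 * m) = c (0, 0, 0) + c (m, 0, 0) - c (0, k, 2 * m)] (mod N)"
    by (intro cong_add cong_diff cong_refl V_cocycle_mod_zero_ends)
  finally show ?thesis by (simp add: cong_iff_dvd_diff algebra_simps)
qed

end

lemma int_cocycle_vanishes:
  fixes f :: "int \<Rightarrow> int \<Rightarrow> int"
  assumes cocycle: "\<And>k h g. [f k (h + g) = f k h + f (k + h) g - f h g] (mod N)"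
    and row0: "\<And>g. [f 0 g = 0] (mod N)" and row1: "\<And>g. [f 1 g = 0] (mod N)"
  shows "[f (int j) g = 0] (mod N)"
proof (induction j arbitrary: g)
  case 0
  then show ?case using row0 by simp
next
  case (Suc j)
  have "[f (1 + int j) g = f 1 (int j + g) - f 1 (int j) + f (int j) g] (mod N)"
    using cocycle[of 1 "int j" g] by (simp add: cong_iff_dvd_diff dvd_diff_commute algebra_simps)
  also have "[f 1 (int j + g) - f 1 (int j) + f (int j) g = 0 - 0 + 0] (mod N)"
    by (intro cong_add cong_diff row1 Suc)
  finally show ?case by simp
qed

lemma V_cocycle_mod_vanishing_values:
  assumes cocycle: "V_cocycle_mod N D" and periodic: "periodic4 D"
    and zero: "[D (0, 0, 0) = 0] (mod N)" "[D (1, 0, 0) = 0] (mod N)"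
      "[D (0, 1, 1) = 0] (mod N)" "[D (0, 1, 2) = 0] (mod N)"
  shows "[D (0, 1, g) = 0] (mod N)" and "[D (m, 0, 0) = 0] (mod N)"
proof -
  note periodic = periodic4D[OF periodic]
  have "[D (0, 2, 1) = D (0, 1, 2)] (mod N)"
    using V_cocycle_mod_group_cocycle[OF cocycle, of 1 1 1]
    by (simp add: cong_iff_dvd_diff dvd_diff_commute algebra_simps)
  then have f21: "[D (0, 2, 1) = 0] (mod N)"
    using zero(4) by (rule cong_trans)
  have "[D (3, 0, 0) = D (1, 0, 0) + D (0, 2, 1) - D (0, 1, 2)] (mod N)"
    using V_cocycle_mod_base_act[OF cocycle, of 1 1] periodic[of 0 6 1] by (simp add: V_act_def)
  also have "[D (1, 0, 0) + D (0, 2, 1) - D (0, 1, 2) = 0 + 0 - 0] (mod N)"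
    by (intro cong_add cong_diff zero f21)
  finally have a3: "[D (3, 0, 0) = 0] (mod N)" by simp
  have "[D (2, 0, 0) = D (3, 0, 0) - D (1, 0, 0) + D (0, 2, 0)] (mod N)"
    using V_cocycle_mod_base_add[OF cocycle, of 1 2] periodic[of 0 2 4]
    by (simp add: cong_iff_dvd_diff dvd_diff_commute algebra_simps)
  also have "[D (3, 0, 0) - D (1, 0, 0) + D (0, 2, 0) = 0 - 0 + 0] (mod N)"
    by (intro cong_add cong_diff zero a3 cong_trans[OF V_cocycle_mod_zero_ends[OF cocycle]])
  finally have a2: "[D (2, 0, 0) = 0] (mod N)" by simp
  have "[D (0, 2, 2) = D (1, 0, 0) + D (1, 0, 0) - D (2, 0, 0)] (mod N)"
    using V_cocycle_mod_base_add[OF cocycle, of 1 1]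
    by (simp add: cong_iff_dvd_diff dvd_diff_commute algebra_simps)
  also have "[D (1, 0, 0) + D (1, 0, 0) - D (2, 0, 0) = 0 + 0 - 0] (mod N)"
    by (intro cong_add cong_diff zero a2)
  finally have f22: "[D (0, 2, 2) = 0] (mod N)" by simp
  have "[D (0, 1, 3) = D (0, 1, 1) + D (0, 2, 2) - D (0, 1, 2)] (mod N)"
    using V_cocycle_mod_group_cocycle[OF cocycle, of 1 1 2] by simp
  also have "[D (0, 1, 1) + D (0, 2, 2) - D (0, 1, 2) = 0 + 0 - 0] (mod N)"
    by (intro cong_add cong_diff zero f22)
  finally have f13: "[D (0, 1, 3) = 0] (mod N)" by simp
  have "g mod 4 \<in> {0, 1, 2, 3}" "m mod 4 \<in> {0, 1, 2, 3}"
    by auto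
  then show "[D (0, 1, g) = 0] (mod N)" and "[D (m, 0, 0) = 0] (mod N)"
    using periodic[of 0 1 g] periodic[of m 0 0] zero a2 a3 f13
      cong_trans[OF V_cocycle_mod_zero_ends[OF cocycle, of 1] zero(1)]
    by auto
qed

lemma V_cocycle_mod_rigid:
  assumes cocycle: "V_cocycle_mod N D" and periodic: "periodic4 D"
    and zero: "[D (0, 0, 0) = 0] (mod N)" "[D (1, 0, 0) = 0] (mod N)"
      "[D (0, 1, 1) = 0] (mod N)" "[D (0, 1, 2) = 0] (mod N)"
  shows "[D x = 0] (mod N)"
proof -
  note vanishing = V_cocycle_mod_vanishing_values[OF assms]
  have "[D (0, h, g) = 0] (mod N)" for h g
  proof -
    have row0: "[D (0, 0, g) = 0] (mod N)" for g
      using V_cocycle_mod_zero_middle[OF cocycle, of 0 g] zero(1) by (rule cong_trans)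
    have "[D (0, int (nat (h mod 4)), g) = 0] (mod N)"
      using V_cocycle_mod_group_cocycle[OF cocycle] row0 vanishing(1) by (rule int_cocycle_vanishes)
    then show ?thesis
      using periodic4D[OF periodic, of 0 h g] periodic4D[OF periodic, of 0 "h mod 4" g] by simp
  qed
  moreover obtain m h g where x: "x = (m, h, g)"
    by (cases x)
  ultimately have "[D (m, 0, 0) - D (0, 2 * m, h) + D (0, h, g) = 0 - 0 + 0] (mod N)"
    by (intro cong_add cong_diff vanishing(2))
  then show ?thesis
    unfolding x using V_cocycle_mod_decompose[OF cocycle] by (auto intro: cong_trans)
qed

section \<open>Classification of cocycles\<close>

definition V_invariant :: "(int \<times> int \<times> int \<Rightarrow> int) \<Rightarrow> int" where
  "V_invariant c = c (1, 0, 0) + c (0, 1, 1)"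

(* With t = V_invariant c - 2 s, this 1-cochain F makes c - V_coboundary F - t * V_omega vanish
   at the four points of V_cocycle_mod_rigid. *)
definition V_potential :: "(int \<times> int \<times> int \<Rightarrow> int) \<Rightarrow> int \<Rightarrow> int \<Rightarrow> int" where
  "V_potential c s g =
     (if g = 0 then c (0, 0, 0) else if g = 1 then s else if g = 2 then c (1, 0, 0)
      else s + c (1, 0, 0) - c (0, 1, 2))"

lemma V_cocycle_mod_classification:
  assumes cocycle: "V_cocycle_mod N c" and periodic: "periodic4 c"
  shows "[c x = V_coboundary (V_potential c s) x + (V_invariant c - 2 * s) * V_omega x] (mod N)"
proof -
  define D where
    "D x = c x - V_coboundary (V_potential c s) x - (V_invariant c - 2 * s) * V_omega x" for x
  have "V_cocycle_mod N D"
    unfolding D_def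
    by (intro V_cocycle_mod_diff V_cocycle_mod_scale cocycle V_cocycle_mod_coboundary V_cocycle_mod_omega)
  moreover have "periodic4 D"
    using periodic periodic4_coboundary periodic4_omega by (simp add: periodic4_def D_def)
  moreover have "D (0, 0, 0) = 0" "D (1, 0, 0) = 0" "D (0, 1, 1) = 0" "D (0, 1, 2) = 0"
    by (simp_all add: D_def V_coboundary_def V_potential_def V_omega_def V_invariant_def)
  ultimately have "[D x = 0] (mod N)"
    using V_cocycle_mod_rigid by simp
  then show ?thesis
    by (simp add: D_def cong_iff_dvd_diff algebra_simps)
qed

lemma V_invariant_coboundary: "V_invariant (V_coboundary F) = 2 * F 1"
  by (simp add: V_invariant_def V_coboundary_def)

lemma V_invariant_cong:
  "(\<And>x. [c x = c' x] (mod N)) \<Longrightarrow> [V_invariant c = V_invariant c'] (mod N)"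
  unfolding V_invariant_def by (intro cong_add)

lemma V_cocycle_mod_coboundary_iff:
  assumes "V_cocycle_mod N c" and "periodic4 c"
  shows "(\<exists>F. \<forall>x. [c x = V_coboundary F x] (mod N)) \<longleftrightarrow> (\<exists>s. [V_invariant c = 2 * s] (mod N))"
proof
  assume "\<exists>F. \<forall>x. [c x = V_coboundary F x] (mod N)"
  then obtain F where "\<And>x. [c x = V_coboundary F x] (mod N)" by blast
  then have "[V_invariant c = 2 * F 1] (mod N)"
    using V_invariant_cong V_invariant_coboundary by metis
  then show "\<exists>s. [V_invariant c = 2 * s] (mod N)" ..
next
  assume "\<exists>s. [V_invariant c = 2 * s] (mod N)"
  then obtain s where s: "[V_invariant c - 2 * s = 0] (mod N)"
    by (auto simp: cong_diff_iff_cong_0)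
  have "[c x = V_coboundary (V_potential c s) x] (mod N)" for x
  proof -
    have "[c x = V_coboundary (V_potential c s) x + (V_invariant c - 2 * s) * V_omega x] (mod N)"
      using assms by (rule V_cocycle_mod_classification)
    also have "[V_coboundary (V_potential c s) x + (V_invariant c - 2 * s) * V_omega x
        = V_coboundary (V_potential c s) x + 0 * V_omega x] (mod N)"
      by (intro cong_add cong_refl cong_scalar_right s)
    finally show ?thesis by simp
  qed
  then show "\<exists>F. \<forall>x. [c x = V_coboundary F x] (mod N)" by blast
qed

lemma gcd_2_nat: "gcd 2 n = (if even n then 2 else 1 :: nat)"
  using coprime_left_2_iff_odd[of n] by (auto simp: gcd_nat.absorb1 coprime_iff_gcd_eq_1)

lemma exists_double_cong_iff: "(\<exists>s. [x = 2 * s] (mod int n)) \<longleftrightarrow> int (gcd 2 n) dvd x"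
proof (cases "even n")
  case True
  have "(\<exists>s. [x = 2 * s] (mod int n)) \<longleftrightarrow> even x"
  proof
    assume "\<exists>s. [x = 2 * s] (mod int n)"
    then obtain s where "int n dvd x - 2 * s"
      by (auto simp: cong_iff_dvd_diff)
    moreover have "2 dvd int n"
      using True by simp
    ultimately have "even (x - 2 * s)"
      by (rule dvd_trans[rotated])
    then show "even x" by simp
  next
    assume "even x"
    then show "\<exists>s. [x = 2 * s] (mod int n)"
      by (intro exI[of _ "x div 2"]) simp
  qed
  with True show ?thesis
    by (simp add: gcd_2_nat)
next
  case False
  then have "2 * (x * ((int n + 1) div 2)) = x + x * int n"
    by (simp add: algebra_simps)
  then have "[x = 2 * (x * ((int n + 1) div 2))] (mod int n)"
    by (simp add: cong_iff_dvd_diff)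
  with False show ?thesis
    by (auto simp: gcd_2_nat)
qed

section \<open>The cochain complex of V with coefficients in Z/n\<close>

abbreviation "V_C2 n \<equiv> xm_C2 V_G V_M (Zmod n)"
abbreviation "V_Z2 n \<equiv> xm_Z2 V_G V_M (Zmod n) V_mu V_act trivial_action"
abbreviation "V_B2 n \<equiv> xm_B2 V_G V_M (Zmod n) V_mu trivial_action"
abbreviation "V_Z2_group n \<equiv> xm_Z2_group V_G V_M (Zmod n) V_mu V_act trivial_action"
abbreviation "V_H2 n \<equiv> xm_H2 V_G V_M (Zmod n) V_mu V_act trivial_action"

lemma Zmod_eq_integer_mod_group: "Zmod n = integer_mod_group n"
  by (simp add: Zmod_def integer_mod_group_def integer_group_def)

lemma group_Zmod: "group (Zmod n)"
  by (simp add: Zmod_eq_integer_mod_group)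

lemma carrier_Zmod: "carrier (Zmod n) = {x. x mod int n = x}"
proof (cases "n = 0")
  case False
  then have n: "int n > 0" by simp
  have "x \<in> carrier (Zmod n) \<longleftrightarrow> x mod int n = x" for x
  proof
    assume "x \<in> carrier (Zmod n)"
    then show "x mod int n = x"
      using False by (simp add: Zmod_def)
  next
    assume x: "x mod int n = x"
    have "0 \<le> x mod int n" "x mod int n < int n"
      using n by simp_all
    then show "x \<in> carrier (Zmod n)"
      using False x by (simp add: Zmod_def)
  qed
  then show ?thesis by blast
qed (simp add: Zmod_def)

lemma one_Zmod [simp]: "\<one>\<^bsub>Zmod n\<^esub> = 0"
  by (simp add: Zmod_eq_integer_mod_group)

lemma mult_Zmod [simp]: "x \<otimes>\<^bsub>Zmod n\<^esub> y = (x + y) mod int n"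
  by (simp add: Zmod_eq_integer_mod_group)

lemma inv_Zmod: "x \<in> carrier (Zmod n) \<Longrightarrow> inv\<^bsub>Zmod n\<^esub> x = (- x) mod int n"
  by (simp add: Zmod_eq_integer_mod_group)

lemma carrier_V_G: "carrier V_G = {0..<4}"
  by (simp add: V_G_def Zmod_def)

lemma mult_V_G [simp]: "x \<otimes>\<^bsub>V_G\<^esub> y = (x + y) mod 4"
  by (simp add: V_G_def Zmod_def)

lemma mult_V_M [simp]: "x \<otimes>\<^bsub>V_M\<^esub> y = (x + y) mod 4"
  by (simp add: V_M_def Zmod_def)

lemma V_act_mod4 [simp]: "V_act (k mod 4) (m mod 4) = V_act k m mod 4"
proof -
  have "even (k mod 4) \<longleftrightarrow> even k" by presburger
  then show ?thesis
    by (simp add: V_act_def mod_minus_eq)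
qed

lemma xm_dom2_V: "xm_dom2 V_G V_M = {0..<4} \<times> {0..<4} \<times> {0..<4}"
  by (simp add: xm_dom2_def V_G_def V_M_def Zmod_def)

lemma xm_dom3_V:
  "xm_dom3 V_G V_M = {0..<4} \<times> {0..<4} \<times> {0..<4} \<times> {0..<4} \<times> {0..<4} \<times> {0..<4}"
  by (simp add: xm_dom3_def V_G_def V_M_def Zmod_def)

definition V_cochain :: "nat \<Rightarrow> (int \<times> int \<times> int \<Rightarrow> int) \<Rightarrow> int \<times> int \<times> int \<Rightarrow> int" where
  "V_cochain n c = (\<lambda>x \<in> xm_dom2 V_G V_M. c x mod int n)"

definition periodic_ext4 :: "(int \<times> int \<times> int \<Rightarrow> int) \<Rightarrow> int \<times> int \<times> int \<Rightarrow> int" where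
  "periodic_ext4 c = (\<lambda>(m, h, g). c (m mod 4, h mod 4, g mod 4))"

lemma periodic4_periodic_ext4: "periodic4 (periodic_ext4 c)"
  by (simp add: periodic4_def periodic_ext4_def)

lemma V_cochain_periodic_ext4:
  assumes "c \<in> V_C2 n"
  shows "V_cochain n (periodic_ext4 c) = c"
proof
  fix x
  show "V_cochain n (periodic_ext4 c) x = c x"
  proof (cases "x \<in> xm_dom2 V_G V_M")
    case True
    then show ?thesis
      using assms by (auto simp: V_cochain_def periodic_ext4_def xm_C2_def xm_dom2_V carrier_Zmod)
  next
    case False
    then show ?thesis
      using assms by (auto simp: V_cochain_def xm_C2_def)
  qed
qed

lemma periodic_ext4_V_cochain:
  "periodic4 c \<Longrightarrow> periodic_ext4 (V_cochain n c) = (\<lambda>x. c x mod int n)"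
  by (auto simp: periodic_ext4_def V_cochain_def xm_dom2_V periodic4_def)

lemma V_cochain_in_C2: "V_cochain n c \<in> V_C2 n"
  by (simp add: V_cochain_def xm_C2_def carrier_Zmod)

lemma V_cochain_eq_iff:
  assumes "periodic4 c" and "periodic4 c'"
  shows "V_cochain n c = V_cochain n c' \<longleftrightarrow> (\<forall>x. [c x = c' x] (mod int n))"
proof
  assume eq: "V_cochain n c = V_cochain n c'"
  show "\<forall>x. [c x = c' x] (mod int n)"
  proof
    fix x :: "int \<times> int \<times> int"
    obtain m h g where x: "x = (m, h, g)" by (cases x)
    have "(m mod 4, h mod 4, g mod 4) \<in> xm_dom2 V_G V_M"
      by (simp add: xm_dom2_V)
    then have "[c (m mod 4, h mod 4, g mod 4) = c' (m mod 4, h mod 4, g mod 4)] (mod int n)"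
      using fun_cong[OF eq, of "(m mod 4, h mod 4, g mod 4)"] by (simp add: V_cochain_def cong_def)
    then show "[c x = c' x] (mod int n)"
      using assms by (simp add: x periodic4D)
  qed
next
  assume "\<forall>x. [c x = c' x] (mod int n)"
  then show "V_cochain n c = V_cochain n c'"
    by (auto simp: V_cochain_def cong_def intro!: restrict_ext)
qed

lemma xm_d2_V:
  assumes "c \<in> V_C2 n"
  shows "xm_d2 V_G V_M (Zmod n) V_mu V_act trivial_action c (p mod 4, q mod 4, k mod 4, m mod 4, h mod 4, g mod 4)
    = (periodic_ext4 c (p, 2 * q + k, 2 * m + h) + periodic_ext4 c (q + V_act k m, k + h, g)
       - periodic_ext4 c (p + q, k, h + g) - periodic_ext4 c (m, h, g)) mod int n"
    (is "?d2 = (?c1 + ?c3 - ?c2 - ?c4) mod int n")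
proof -
  have carrier: "periodic_ext4 c x \<in> carrier (Zmod n)" for x
    using assms by (auto simp: xm_C2_def xm_dom2_V periodic_ext4_def split: prod.split)
  have c1: "c (p mod 4, (2 * (q mod 4) mod 4 + k mod 4) mod 4, (2 * (m mod 4) mod 4 + h mod 4) mod 4) = ?c1"
    and c2: "c ((p mod 4 + q mod 4) mod 4, k mod 4, (h mod 4 + g mod 4) mod 4) = ?c2"
    and c3: "c ((q mod 4 + V_act (k mod 4) (m mod 4)) mod 4, (k mod 4 + h mod 4) mod 4, g mod 4) = ?c3"
    and c4: "c (m mod 4, h mod 4, g mod 4) = ?c4"
    by (simp_all add: periodic_ext4_def mod_simps)
  have "(p mod 4, q mod 4, k mod 4, m mod 4, h mod 4, g mod 4) \<in> xm_dom3 V_G V_M"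
    by (simp add: xm_dom3_V)
  then have "?d2 = (((?c1 + (- ?c2) mod int n) mod int n + ?c3) mod int n + (- ?c4) mod int n) mod int n"
    unfolding xm_d2_def
    by (simp only: restrict_apply' prod.case mult_Zmod mult_V_G mult_V_M V_mu_def trivial_action_def
        c1 c2 c3 c4 inv_Zmod[OF carrier])
  also have "\<dots> = (?c1 + ?c3 - ?c2 - ?c4) mod int n"
    by (simp only: mod_add_left_eq mod_add_right_eq diff_conv_add_uminus ac_simps)
  finally show ?thesis .
qed

lemma xm_Z2_V_iff:
  "c \<in> V_Z2 n \<longleftrightarrow> c \<in> V_C2 n \<and> V_cocycle_mod (int n) (periodic_ext4 c)"
proof (cases "c \<in> V_C2 n")
  case True
  have "(\<forall>x\<in>xm_dom3 V_G V_M. xm_d2 V_G V_M (Zmod n) V_mu V_act trivial_action c x = 0)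
      \<longleftrightarrow> (\<forall>p q k m h g. xm_d2 V_G V_M (Zmod n) V_mu V_act trivial_action c
                          (p mod 4, q mod 4, k mod 4, m mod 4, h mod 4, g mod 4) = 0)"
    by (auto simp: xm_dom3_V) (metis mod_pos_pos_trivial)
  also have "\<dots> \<longleftrightarrow> V_cocycle_mod (int n) (periodic_ext4 c)"
    by (simp add: xm_d2_V[OF True] V_cocycle_mod_def cong_iff_dvd_diff dvd_eq_mod_eq_0 algebra_simps)
  finally show ?thesis
    using True by (simp add: xm_Z2_def)
qed (simp add: xm_Z2_def)

lemma xm_Z2_V_eq:
  "V_Z2 n = V_cochain n ` {c. periodic4 c \<and> V_cocycle_mod (int n) c}"
proof (intro equalityI subsetI)
  fix c
  assume "c \<in> V_Z2 n"
  then have "c \<in> V_C2 n" "V_cocycle_mod (int n) (periodic_ext4 c)"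
    by (simp_all add: xm_Z2_V_iff)
  then show "c \<in> V_cochain n ` {c. periodic4 c \<and> V_cocycle_mod (int n) c}"
    using V_cochain_periodic_ext4 periodic4_periodic_ext4 by (metis (mono_tags, lifting) image_eqI mem_Collect_eq)
next
  fix c'
  assume "c' \<in> V_cochain n ` {c. periodic4 c \<and> V_cocycle_mod (int n) c}"
  then obtain c where c': "c' = V_cochain n c" and "periodic4 c" and cocycle: "V_cocycle_mod (int n) c"
    by blast
  then have "periodic_ext4 c' = (\<lambda>x. c x mod int n)"
    by (simp add: periodic_ext4_V_cochain)
  then have "V_cocycle_mod (int n) (periodic_ext4 c')"
    using V_cocycle_mod_cong[OF cocycle] by simp
  then show "c' \<in> V_Z2 n"
    using V_cochain_in_C2 c' by (simp add: xm_Z2_V_iff)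
qed

lemma xm_d1_V:
  assumes f: "f \<in> xm_C1 V_G (Zmod n)"
  shows "xm_d1 V_G V_M (Zmod n) V_mu trivial_action f = V_cochain n (V_coboundary f)"
proof
  fix x
  show "xm_d1 V_G V_M (Zmod n) V_mu trivial_action f x = V_cochain n (V_coboundary f) x"
  proof (cases "x \<in> xm_dom2 V_G V_M")
    case True
    then obtain m h g where x: "x = (m, h, g)" and g: "g mod 4 = g"
      by (auto simp: xm_dom2_V)
    have carrier: "f (a mod 4) \<in> carrier (Zmod n)" for a
      using f by (auto simp: xm_C1_def carrier_V_G)
    have "(2 * m mod 4 + h) mod 4 = (2 * m + h) mod 4"
      by (simp add: mod_simps)
    then have "xm_d1 V_G V_M (Zmod n) V_mu trivial_action f x
        = ((f ((2 * m + h) mod 4) + (- f ((h + g) mod 4)) mod int n) mod int n + f (g mod 4)) mod int n"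
      using True unfolding xm_d1_def x
      by (simp only: restrict_apply' prod.case mult_Zmod mult_V_G V_mu_def trivial_action_def
          inv_Zmod[OF carrier] g)
    also have "\<dots> = V_cochain n (V_coboundary f) x"
      using True by (simp add: x V_cochain_def V_coboundary_def mod_simps)
    finally show ?thesis .
  qed (simp add: xm_d1_def V_cochain_def)
qed

lemma xm_B2_V_eq:
  "V_B2 n = V_cochain n ` range V_coboundary"
proof (intro equalityI subsetI)
  fix b
  assume "b \<in> V_B2 n"
  then show "b \<in> V_cochain n ` range V_coboundary"
    by (auto simp: xm_B2_def xm_d1_V)
next
  fix b
  assume "b \<in> V_cochain n ` range V_coboundary"
  then obtain F where b: "b = V_cochain n (V_coboundary F)"
    by blast
  define f where "f = (\<lambda>g \<in> {0..<4}. F g mod int n)"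
  have f: "f \<in> xm_C1 V_G (Zmod n)"
    by (simp add: f_def xm_C1_def carrier_V_G carrier_Zmod)
  have "[V_coboundary f x = V_coboundary F x] (mod int n)" for x
    by (auto simp: V_coboundary_def f_def split: prod.split intro!: cong_add cong_diff)
  then have "V_cochain n (V_coboundary f) = b"
    unfolding b by (simp add: V_cochain_eq_iff periodic4_coboundary)
  then show "b \<in> V_B2 n"
    using f by (auto simp: xm_B2_def xm_d1_V[symmetric])
qed

section \<open>The second cohomology group\<close>

lemma xm_Z2_group_eq_product_group:
  "xm_Z2_group G Mv A mu act phi
    = (product_group (xm_dom2 G Mv) (\<lambda>_. A))\<lparr>carrier := xm_Z2 G Mv A mu act phi\<rparr>"
  by (simp add: xm_Z2_group_def product_group_def)

abbreviation V_cochains :: "nat \<Rightarrow> (int \<times> int \<times> int \<Rightarrow> int) monoid" where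
  "V_cochains n \<equiv> product_group (xm_dom2 V_G V_M) (\<lambda>_. Zmod n)"

lemma V_cochain_mult:
  "V_cochain n c \<otimes>\<^bsub>V_cochains n\<^esub> V_cochain n c' = V_cochain n (\<lambda>x. c x + c' x)"
  by (auto simp: V_cochain_def mod_simps intro!: restrict_ext)

lemma V_cochain_inv: "inv\<^bsub>V_cochains n\<^esub> V_cochain n c = V_cochain n (\<lambda>x. - c x)"
proof -
  have "V_cochain n c \<in> carrier (V_cochains n)"
    using V_cochain_in_C2 by (simp add: xm_C2_def)
  then show ?thesis
    using group_Zmod by (auto simp: V_cochain_def carrier_Zmod inv_Zmod mod_minus_eq intro!: restrict_ext)
qed

lemma subgroup_xm_Z2_V: "subgroup (V_Z2 n) (V_cochains n)"
proof (rule group.subgroupI)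
  show "group (V_cochains n)"
    using group_Zmod by simp
  show "V_Z2 n \<subseteq> carrier (V_cochains n)"
    by (auto simp: xm_Z2_def xm_C2_def)
  have "V_cocycle_mod (int n) (\<lambda>x. 0 * V_omega x)"
    by (rule V_cocycle_mod_scale[OF V_cocycle_mod_omega])
  then have "V_cochain n (\<lambda>_. 0) \<in> V_Z2 n"
    by (auto simp: xm_Z2_V_eq periodic4_def)
  then show "V_Z2 n \<noteq> {}"
    by blast
next
  fix a
  assume "a \<in> V_Z2 n"
  then obtain c where "a = V_cochain n c" "periodic4 c" "V_cocycle_mod (int n) c"
    by (auto simp: xm_Z2_V_eq)
  then show "inv\<^bsub>V_cochains n\<^esub> a \<in> V_Z2 n"
    using V_cocycle_mod_scale[of "int n" c "- 1"]
    by (auto simp: xm_Z2_V_eq V_cochain_inv periodic4_def)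
next
  fix a b
  assume "a \<in> V_Z2 n" and "b \<in> V_Z2 n"
  then obtain c c' where ab: "a = V_cochain n c" "b = V_cochain n c'"
    and "periodic4 c" "V_cocycle_mod (int n) c" "periodic4 c'" "V_cocycle_mod (int n) c'"
    by (auto simp: xm_Z2_V_eq)
  then have "V_cochain n (\<lambda>x. c x + c' x) \<in> V_Z2 n"
    unfolding xm_Z2_V_eq by (intro imageI) (simp add: V_cocycle_mod_add periodic4_def)
  then show "a \<otimes>\<^bsub>V_cochains n\<^esub> b \<in> V_Z2 n"
    by (simp only: ab V_cochain_mult)
qed

lemma group_xm_Z2_group_V: "group (V_Z2_group n)"
  unfolding xm_Z2_group_eq_product_group
  using subgroup.subgroup_is_group[OF subgroup_xm_Z2_V] group_Zmod by simp

definition V_class :: "nat \<Rightarrow> (int \<times> int \<times> int \<Rightarrow> int) \<Rightarrow> int" where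
  "V_class n c = (c (1, 0, 0) + c (0, 1, 1)) mod int (gcd 2 n)"

lemma V_class_V_cochain: "V_class n (V_cochain n c) = V_invariant c mod int (gcd 2 n)"
proof -
  have "[a mod int n = a] (mod int (gcd 2 n))" for a
    by (rule cong_dvd_modulus[of _ _ "int n"]) simp_all
  then have "[c (1, 0, 0) mod int n + c (0, 1, 1) mod int n = c (1, 0, 0) + c (0, 1, 1)] (mod int (gcd 2 n))"
    by (intro cong_add)
  then show ?thesis
    by (simp add: V_class_def V_cochain_def xm_dom2_V V_invariant_def cong_def)
qed

lemma V_class_hom: "group_hom (V_Z2_group n) (Zmod (gcd 2 n)) (V_class n)"
proof -
  have "V_class n \<in> hom (V_Z2_group n) (Zmod (gcd 2 n))"
  proof (rule homI)
    fix a
    show "V_class n a \<in> carrier (Zmod (gcd 2 n))"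
      by (simp add: V_class_def carrier_Zmod)
  next
    fix a b
    assume "a \<in> carrier (V_Z2_group n)" and "b \<in> carrier (V_Z2_group n)"
    then obtain c c' where ab: "a = V_cochain n c" "b = V_cochain n c'"
      by (auto simp: xm_Z2_group_def xm_Z2_V_eq)
    have "a \<otimes>\<^bsub>V_Z2_group n\<^esub> b = a \<otimes>\<^bsub>V_cochains n\<^esub> b"
      by (simp add: xm_Z2_group_eq_product_group)
    then show "V_class n (a \<otimes>\<^bsub>V_Z2_group n\<^esub> b)
        = V_class n a \<otimes>\<^bsub>Zmod (gcd 2 n)\<^esub> V_class n b"
      by (simp only: ab V_cochain_mult V_class_V_cochain mult_Zmod)
        (simp add: V_invariant_def mod_add_eq ac_simps)
  qed
  then show ?thesis
    using group_xm_Z2_group_V group_Zmod by (simp add: group_hom_def group_hom_axioms_def)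
qed

lemma V_class_image: "V_class n ` carrier (V_Z2_group n) = carrier (Zmod (gcd 2 n))"
proof
  show "V_class n ` carrier (V_Z2_group n) \<subseteq> carrier (Zmod (gcd 2 n))"
    by (auto simp: V_class_def carrier_Zmod)
  show "carrier (Zmod (gcd 2 n)) \<subseteq> V_class n ` carrier (V_Z2_group n)"
  proof
    fix y
    assume y: "y \<in> carrier (Zmod (gcd 2 n))"
    have "periodic4 (\<lambda>x. y * V_omega x)"
      using periodic4_omega by (simp add: periodic4_def)
    then have "V_cochain n (\<lambda>x. y * V_omega x) \<in> carrier (V_Z2_group n)"
      unfolding xm_Z2_group_def xm_Z2_V_eq
      by (simp add: V_cocycle_mod_scale V_cocycle_mod_omega)
    moreover have "V_class n (V_cochain n (\<lambda>x. y * V_omega x)) = y"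
      using y by (simp add: V_class_V_cochain V_invariant_def V_omega_def carrier_Zmod)
    ultimately show "y \<in> V_class n ` carrier (V_Z2_group n)"
      by (metis image_eqI)
  qed
qed

lemma V_cochain_in_xm_B2_iff:
  assumes "periodic4 c" and "V_cocycle_mod (int n) c"
  shows "V_cochain n c \<in> V_B2 n \<longleftrightarrow> V_class n (V_cochain n c) = 0"
proof -
  have "V_cochain n c \<in> V_B2 n \<longleftrightarrow> (\<exists>F. V_cochain n c = V_cochain n (V_coboundary F))"
    by (auto simp: xm_B2_V_eq)
  also have "\<dots> \<longleftrightarrow> (\<exists>F. \<forall>x. [c x = V_coboundary F x] (mod int n))"
    by (simp add: V_cochain_eq_iff assms(1) periodic4_coboundary)
  also have "\<dots> \<longleftrightarrow> (\<exists>s. [V_invariant c = 2 * s] (mod int n))"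
    by (rule V_cocycle_mod_coboundary_iff[OF assms(2,1)])
  also have "\<dots> \<longleftrightarrow> V_class n (V_cochain n c) = 0"
    by (simp add: exists_double_cong_iff V_class_V_cochain dvd_eq_mod_eq_0)
  finally show ?thesis .
qed

lemma V_class_kernel:
  "kernel (V_Z2_group n) (Zmod (gcd 2 n)) (V_class n) = V_B2 n"
proof (intro equalityI subsetI)
  fix a
  assume "a \<in> kernel (V_Z2_group n) (Zmod (gcd 2 n)) (V_class n)"
  then have "a \<in> V_Z2 n" and a_class: "V_class n a = 0"
    by (simp_all add: kernel_def xm_Z2_group_def)
  then obtain c where "a = V_cochain n c" "periodic4 c" "V_cocycle_mod (int n) c"
    by (auto simp: xm_Z2_V_eq)
  with a_class show "a \<in> V_B2 n"
    by (simp add: V_cochain_in_xm_B2_iff)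
next
  fix a
  assume B2: "a \<in> V_B2 n"
  then obtain F where a: "a = V_cochain n (V_coboundary F)"
    by (auto simp: xm_B2_V_eq)
  have "a \<in> V_Z2 n"
    unfolding a xm_Z2_V_eq by (intro imageI) (simp add: periodic4_coboundary V_cocycle_mod_coboundary)
  moreover have "V_class n a = 0"
    using B2 V_cochain_in_xm_B2_iff[OF periodic4_coboundary V_cocycle_mod_coboundary] by (simp add: a)
  ultimately show "a \<in> kernel (V_Z2_group n) (Zmod (gcd 2 n)) (V_class n)"
    by (simp add: kernel_def xm_Z2_group_def)
qed

lemma xm_H2_V_iso: "V_H2 n \<cong> Zmod (gcd 2 n)"
  using group_hom.FactGroup_iso[OF V_class_hom V_class_image] by (simp add: xm_H2_def V_class_kernel)

lemma group_xm_H2_V: "group (V_H2 n)"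
  using normal.factorgroup_is_group[OF group_hom.normal_kernel[OF V_class_hom]]
  by (simp add: xm_H2_def V_class_kernel)

theorem mainTheorem19:
  fixes n :: nat
  shows "(even n \<longrightarrow> xm_H2 V_G V_M (Zmod n) V_mu V_act trivial_action \<cong> Zmod 2)
       \<and> (odd n \<longrightarrow> trivial_group (xm_H2 V_G V_M (Zmod n) V_mu V_act trivial_action))"
proof (intro conjI impI)
  assume "even n"
  then show "V_H2 n \<cong> Zmod 2"
    using xm_H2_V_iso[of n] by (simp add: gcd_2_nat)
next
  assume "odd n"
  then have "V_H2 n \<cong> Zmod 1"
    using xm_H2_V_iso[of n] by (simp add: gcd_2_nat)
  moreover have "trivial_group (Zmod 1)"
    by (simp add: Zmod_eq_integer_mod_group trivial_integer_mod_group)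
  ultimately show "trivial_group (V_H2 n)"
    using isomorphic_group_triviality group_xm_H2_V group_Zmod by blast
qed

end
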